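(* Let $a_1,\dots,a_n$ be nonzero integers and suppose the equation $$a_1x_1+\cdots+a_nx_n=0$$ is $r$-regular. Let $C$ be a positive constant. Then for every coloring of the positive integers $\mathbb{N}$ with $r$ colors, there exist positive integers $x_1,\dots,x_n$ satisfying $a_1x_1+\cdots+a_nx_n=0$ and a positive integer $d$ such that all the numbers $$x_i+\lambda d,\qquad 1\le i\le n,\ \lambda\in\mathbb{Z},\ |\lambda|\le C,$$ have the same color.
   Context: For a positive integer $r$, a linear homogeneous equation $a_1x_1+\cdots+a_nx_n=0$ with nonzero integer coefficients is called $r$-regular if for every coloring of the positive integers with $r$ colors there exist positive integers $x_1,\dots,x_n$, all of the same color, satisfying the equation. *)

theory Defs
  imports Complex_Main
begin

text \<open>An r-colouring of the positive integers: a map from int to colours {0..<r},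
 only the values at positive arguments matter.\<close>

definition r_regular :: "nat \<Rightarrow> nat \<Rightarrow> (nat \<Rightarrow> int) \<Rightarrow> bool" where
  "r_regular r n a \<longleftrightarrow>
     (\<forall>c :: int \<Rightarrow> nat. (\<forall>y>0. c y < r) \<longrightarrow>
        (\<exists>x :: nat \<Rightarrow> int. (\<forall>i<n. x i > 0) \<and> (\<Sum>i<n. a i * x i) = 0 \<and>
           (\<exists>k. \<forall>i<n. c (x i) = k)))"

end

theory Submission
  imports Defs "HOL-Library.Countable"
begin

text \<open>By compactness, \<open>r\<close>-regularity already yields monochromatic solutions inside some
  finite interval \<open>[1, N]\<close>. Colour \<open>t\<close> by the vector of colours of \<open>t, 2t, \<dots>, Nt\<close>; van der
  Waerden's theorem (proved by colour focusing) gives a long progression \<open>T + i e\<close>, \<open>|i| \<le> K\<close>,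
  on which this vector is constant. Take a monochromatic solution \<open>x'\<close> in \<open>[1, N]\<close> of the
  colouring \<open>y \<mapsto> c (T y)\<close>, put \<open>x = T x'\<close> and \<open>d = e N!\<close>. Then
  \<open>x\<^sub>j + \<lambda> d = (T + \<lambda> (N! / x'\<^sub>j) e) x'\<^sub>j\<close> has the colour of \<open>T x'\<^sub>j\<close>.\<close>

section \<open>Van der Waerden's theorem\<close>

definition mono_progression :: "nat \<Rightarrow> (nat \<Rightarrow> 'a) \<Rightarrow> nat \<Rightarrow> bool" where
  "mono_progression k f W \<longleftrightarrow>
     (\<exists>a d. 0 < d \<and> a + k * d \<le> W \<and> (\<forall>i<k. f (a + i * d) = f a))"

definition vdW :: "nat \<Rightarrow> bool" where
  "vdW k \<longleftrightarrow>
     (\<forall>S. finite S \<longrightarrow> (\<exists>W. \<forall>f :: nat \<Rightarrow> nat. range f \<subseteq> S \<longrightarrow> mono_progression k f W))"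

lemma mono_progression_mono:
  "mono_progression k f W \<Longrightarrow> W \<le> W' \<Longrightarrow> mono_progression k f W'"
  unfolding mono_progression_def by (meson order_trans)

lemma mono_progression_shift:
  "mono_progression k (\<lambda>x. f (u + x)) W \<Longrightarrow> mono_progression k f (u + W)"
  unfolding mono_progression_def
  by (metis (no_types, lifting) add.assoc add_le_cancel_left)

lemma mono_progression_inj_comp:
  "inj g \<Longrightarrow> mono_progression k (g \<circ> f) W \<longleftrightarrow> mono_progression k f W"
  unfolding mono_progression_def by (simp add: inj_eq)

text \<open>\<open>vdW\<close> fixes the colour type to \<open>nat\<close> so that the induction on \<open>k\<close> stays at one type;
  the block colourings of the inductive step take values in lists and are transported via \<open>to_nat\<close>.\<close>

lemma vdW_countable:
  assumes "vdW k" and "finite S"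
  shows "\<exists>W. \<forall>f :: nat \<Rightarrow> 'a :: countable. range f \<subseteq> S \<longrightarrow> mono_progression k f W"
proof -
  obtain W where W: "\<forall>g :: nat \<Rightarrow> nat. range g \<subseteq> to_nat ` S \<longrightarrow> mono_progression k g W"
    using assms unfolding vdW_def by blast
  have "mono_progression k f W" if "range f \<subseteq> S" for f :: "nat \<Rightarrow> 'a"
    using W[rule_format, of "to_nat \<circ> f"] that
    by (auto simp: mono_progression_inj_comp image_comp[symmetric])
  then show ?thesis by blast
qed

lemma vdW_blocks:
  assumes "vdW k" and "finite S"
  shows "\<exists>M. \<forall>f :: nat \<Rightarrow> 'a :: countable. range f \<subseteq> S \<longrightarrow>
           (\<exists>b e. 0 < e \<and> b + k * e \<le> M \<and>
              (\<forall>i<k. \<forall>x<L. f (L * (b + i * e) + x) = f (L * b + x)))"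
proof -
  define blocks where "blocks = {xs. set xs \<subseteq> S \<and> length xs = L}"
  have "finite blocks"
    unfolding blocks_def using finite_lists_length_eq[OF \<open>finite S\<close>] .
  then obtain M where M: "\<forall>g :: nat \<Rightarrow> 'a list. range g \<subseteq> blocks \<longrightarrow> mono_progression k g M"
    using vdW_countable[OF \<open>vdW k\<close>] by blast
  have "\<exists>b e. 0 < e \<and> b + k * e \<le> M \<and> (\<forall>i<k. \<forall>x<L. f (L * (b + i * e) + x) = f (L * b + x))"
    if "range f \<subseteq> S" for f :: "nat \<Rightarrow> 'a"
  proof -
    define g where "g b = map (\<lambda>x. f (L * b + x)) [0..<L]" for b
    have "range g \<subseteq> blocks"
      using that by (auto simp: g_def blocks_def image_subset_iff)
    then obtain b e where "0 < e" "b + k * e \<le> M" and "\<forall>i<k. g (b + i * e) = g b"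
      using M unfolding mono_progression_def by blast
    then show ?thesis
      unfolding g_def by (auto simp: map_eq_conv atLeast0LessThan)
  qed
  then show ?thesis by blast
qed

text \<open>Colour focusing: the \<open>s\<close> progressions have distinct colours and the common next term
  \<open>F\<close>, the focus.\<close>

definition focused_progressions :: "nat \<Rightarrow> (nat \<Rightarrow> 'a) \<Rightarrow> nat \<Rightarrow> nat \<Rightarrow> bool" where
  "focused_progressions k f N s \<longleftrightarrow>
     (\<exists>F col A D. F \<le> N \<and> inj_on col {..<s} \<and>
        (\<forall>j<s. 0 < D j \<and> A j + k * D j = F \<and> (\<forall>i<k. f (A j + i * D j) = col j)))"

lemma focused_progressions_mono:
  "focused_progressions k f N s \<Longrightarrow> N \<le> N' \<Longrightarrow> focused_progressions k f N' s"
  unfolding focused_progressions_def by (blast intro: le_trans)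

lemma mono_progression_through_focus:
  assumes "0 < k" and "F \<le> N" and "j < s" and "f F = col j"
    and fam: "\<forall>j<s. 0 < D j \<and> A j + k * D j = F \<and> (\<forall>i<k. f (A j + i * D j) = col j)"
  shows "mono_progression (Suc k) f (2 * N)"
  unfolding mono_progression_def
proof (intro exI conjI allI impI)
  have "D j \<le> k * D j"
    using \<open>0 < k\<close> by simp
  moreover have "A j + k * D j = F"
    using fam \<open>j < s\<close> by blast
  ultimately show "A j + Suc k * D j \<le> 2 * N"
    using \<open>F \<le> N\<close> unfolding mult_Suc by linarith
  show "0 < D j"
    using fam \<open>j < s\<close> by blast
  have "f (A j) = col j"
    using fam \<open>j < s\<close> \<open>0 < k\<close> by (metis add_0_right mult_0)
  then show "f (A j + i * D j) = f (A j)" if "i < Suc k" for i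
    using that fam \<open>j < s\<close> \<open>f F = col j\<close> by (cases "i < k") (auto simp: less_Suc_eq)
qed

text \<open>The blocks \<open>b, b + e, \<dots>, b + (k - 1) e\<close> of length \<open>L\<close> are coloured identically, so each
  old progression, moved into block \<open>b\<close> and given the extra difference \<open>L e\<close>, stays
  monochromatic; the focus of block \<open>b\<close> starts one more progression of difference \<open>L e\<close>.\<close>

lemma focused_progressions_extend:
  assumes period: "\<forall>i<k. \<forall>x<L. f (L * (b + i * e) + x) = f (L * b + x)"
    and "0 < e" and "F < L" and inj: "inj_on col {..<s}"
    and fam: "\<forall>j<s. 0 < D j \<and> A j + k * D j = F \<and> (\<forall>i<k. f (L * b + (A j + i * D j)) = col j)"
    and new: "f (L * b + F) \<notin> col ` {..<s}"
  shows "focused_progressions k f (L * (b + k * e) + F) (Suc s)"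
  unfolding focused_progressions_def
proof (intro exI conjI allI impI)
  show "L * (b + k * e) + F \<le> L * (b + k * e) + F" ..
  define col' where "col' = col(s := f (L * b + F))"
  define A' where "A' j = L * b + (if j < s then A j else F)" for j
  define D' where "D' j = (if j < s then D j else 0) + L * e" for j
  show "inj_on col' {..<Suc s}"
    using inj new by (simp add: col'_def lessThan_Suc inj_on_fun_updI)
  fix j assume "j < Suc s"
  show "0 < D' j"
    using \<open>0 < e\<close> \<open>F < L\<close> by (simp add: D'_def)
  show "A' j + k * D' j = L * (b + k * e) + F"
    using fam \<open>j < Suc s\<close> by (auto simp: A'_def D'_def algebra_simps)
  fix i assume "i < k"
  show "f (A' j + i * D' j) = col' j"
  proof (cases "j < s")
    case True
    have "A j + i * D j \<le> A j + k * D j"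
      using \<open>i < k\<close> by simp
    then have "A j + i * D j < L"
      using fam True \<open>F < L\<close> by auto
    moreover have "A' j + i * D' j = L * (b + i * e) + (A j + i * D j)"
      using True by (simp add: A'_def D'_def algebra_simps)
    ultimately show ?thesis
      using period \<open>i < k\<close> fam True by (simp add: col'_def)
  next
    case False
    with \<open>j < Suc s\<close> have "j = s" by simp
    then have "A' j + i * D' j = L * (b + i * e) + F"
      by (simp add: A'_def D'_def algebra_simps)
    then show ?thesis
      using period \<open>i < k\<close> \<open>F < L\<close> \<open>j = s\<close> by (simp add: col'_def)
  qed
qed

lemma focused_progressions_from_block:
  assumes "0 < k" and "0 < e" and "b + k * e \<le> M" and "N < L"
    and period: "\<forall>i<k. \<forall>x<L. f (L * (b + i * e) + x) = f (L * b + x)"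
    and block: "mono_progression (Suc k) (\<lambda>x. f (L * b + x)) N \<or>
      focused_progressions k (\<lambda>x. f (L * b + x)) N s"
  shows "mono_progression (Suc k) f (L * M + 2 * N) \<or>
    focused_progressions k f (L * M + 2 * N) (Suc s)"
proof -
  have bound: "L * b \<le> L * M" "L * (b + k * e) \<le> L * M"
    using \<open>b + k * e \<le> M\<close> mult_le_mono2 by (fastforce, blast)
  consider
      "mono_progression (Suc k) (\<lambda>x. f (L * b + x)) N"
    | F col A D where "F \<le> N" "inj_on col {..<s}"
        "\<forall>j<s. 0 < D j \<and> A j + k * D j = F \<and> (\<forall>i<k. f (L * b + (A j + i * D j)) = col j)"
    using block unfolding focused_progressions_def by blast
  then show ?thesis
  proof cases
    case 1
    then have "mono_progression (Suc k) f (L * b + N)"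
      by (rule mono_progression_shift)
    moreover have "L * b + N \<le> L * M + 2 * N"
      using bound by linarith
    ultimately show ?thesis
      by (blast intro: mono_progression_mono)
  next
    case (2 F col A D)
    show ?thesis
    proof (cases "f (L * b + F) \<in> col ` {..<s}")
      case True
      then obtain j where "j < s" "f (L * b + F) = col j" by auto
      then have "mono_progression (Suc k) (\<lambda>x. f (L * b + x)) (2 * N)"
        using mono_progression_through_focus[OF \<open>0 < k\<close> 2(1) \<open>j < s\<close>,
            where f = "\<lambda>x. f (L * b + x)" and col = col and D = D and A = A] 2(3)
        by simp
      then have "mono_progression (Suc k) f (L * b + 2 * N)"
        by (rule mono_progression_shift)
      moreover have "L * b + 2 * N \<le> L * M + 2 * N"
        using bound by linarith
      ultimately show ?thesis
        by (blast intro: mono_progression_mono)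
    next
      case False
      have "F < L"
        using \<open>F \<le> N\<close> \<open>N < L\<close> by simp
      have "focused_progressions k f (L * (b + k * e) + F) (Suc s)"
        using focused_progressions_extend[OF period \<open>0 < e\<close> \<open>F < L\<close> 2(2,3) False] .
      moreover have "L * (b + k * e) + F \<le> L * M + 2 * N"
        using bound \<open>F \<le> N\<close> by linarith
      ultimately show ?thesis
        by (blast intro: focused_progressions_mono)
    qed
  qed
qed

lemma focused_progressions_step:
  fixes S :: "'a :: countable set"
  assumes "vdW k" and "0 < k" and "finite S"
    and IH: "\<exists>N. \<forall>f :: nat \<Rightarrow> 'a. range f \<subseteq> S \<longrightarrow>
               mono_progression (Suc k) f N \<or> focused_progressions k f N s"
  shows "\<exists>N. \<forall>f :: nat \<Rightarrow> 'a. range f \<subseteq> S \<longrightarrow>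
           mono_progression (Suc k) f N \<or> focused_progressions k f N (Suc s)"
proof -
  obtain N where N: "\<forall>f :: nat \<Rightarrow> 'a. range f \<subseteq> S \<longrightarrow>
      mono_progression (Suc k) f N \<or> focused_progressions k f N s"
    using IH by blast
  define L where "L = Suc N"
  then have "N < L"
    by simp
  obtain M where M: "\<forall>f :: nat \<Rightarrow> 'a. range f \<subseteq> S \<longrightarrow>
      (\<exists>b e. 0 < e \<and> b + k * e \<le> M \<and>
         (\<forall>i<k. \<forall>x<L. f (L * (b + i * e) + x) = f (L * b + x)))"
    using vdW_blocks[OF \<open>vdW k\<close> \<open>finite S\<close>] by blast
  have "mono_progression (Suc k) f (L * M + 2 * N) \<or>
      focused_progressions k f (L * M + 2 * N) (Suc s)"
    if colouring: "range f \<subseteq> S" for f :: "nat \<Rightarrow> 'a"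
  proof -
    obtain b e where "0 < e" and "b + k * e \<le> M"
      and period: "\<forall>i<k. \<forall>x<L. f (L * (b + i * e) + x) = f (L * b + x)"
      using M colouring by blast
    have "range (\<lambda>x. f (L * b + x)) \<subseteq> S"
      using colouring by auto
    then have "mono_progression (Suc k) (\<lambda>x. f (L * b + x)) N \<or>
        focused_progressions k (\<lambda>x. f (L * b + x)) N s"
      using N by blast
    then show ?thesis
      by (rule focused_progressions_from_block[OF \<open>0 < k\<close> \<open>0 < e\<close> \<open>b + k * e \<le> M\<close> \<open>N < L\<close> period])
  qed
  then show ?thesis by blast
qed

lemma vdW_Suc:
  assumes "vdW k" and "0 < k"
  shows "vdW (Suc k)"
  unfolding vdW_def
proof (intro allI impI)
  fix S :: "nat set" assume "finite S"
  have focusing: "\<exists>N. \<forall>f :: nat \<Rightarrow> nat. range f \<subseteq> S \<longrightarrow>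
          mono_progression (Suc k) f N \<or> focused_progressions k f N s" for s
  proof (induction s)
    case 0
    show ?case
      by (rule exI[of _ 0]) (auto simp: focused_progressions_def)
  next
    case (Suc s)
    then show ?case
      by (rule focused_progressions_step[OF assms \<open>finite S\<close>])
  qed
  obtain N where N: "\<forall>f :: nat \<Rightarrow> nat. range f \<subseteq> S \<longrightarrow>
      mono_progression (Suc k) f N \<or> focused_progressions k f N (card S)"
    using focusing ..
  have "mono_progression (Suc k) f (2 * N)" if "range f \<subseteq> S" for f :: "nat \<Rightarrow> nat"
  proof (cases "mono_progression (Suc k) f N")
    case True
    then show ?thesis
      by (rule mono_progression_mono) simp
  next
    case False
    then have "focused_progressions k f N (card S)"
      using N that by blast
    then obtain F col A D where "F \<le> N" and inj: "inj_on col {..<card S}"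
      and fam: "\<forall>j<card S. 0 < D j \<and> A j + k * D j = F \<and> (\<forall>i<k. f (A j + i * D j) = col j)"
      unfolding focused_progressions_def by blast
    have "col j \<in> S" if "j < card S" for j
    proof -
      have "f (A j + 0 * D j) = col j"
        using fam that \<open>0 < k\<close> by blast
      then show ?thesis
        using \<open>range f \<subseteq> S\<close> by (metis add_0_right rangeI subsetD)
    qed
    then have "col ` {..<card S} \<subseteq> S"
      by auto
    moreover have "card (col ` {..<card S}) = card S"
      using card_image[OF inj] by simp
    ultimately have "col ` {..<card S} = S"
      using card_subset_eq[OF \<open>finite S\<close>] by blast
    moreover have "f F \<in> S"
      using \<open>range f \<subseteq> S\<close> by auto
    ultimately obtain j where "j < card S" and "f F = col j"
      by auto
    then show ?thesis
      using mono_progression_through_focus[OF \<open>0 < k\<close> \<open>F \<le> N\<close>] fam by blast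
  qed
  then show "\<exists>W. \<forall>f :: nat \<Rightarrow> nat. range f \<subseteq> S \<longrightarrow> mono_progression (Suc k) f W"
    by blast
qed

lemma vdW_holds: "vdW k"
proof (induction k rule: less_induct)
  case (less k)
  show ?case
  proof (cases "k \<le> 1")
    case True
    have "mono_progression k f 1" for f :: "nat \<Rightarrow> nat"
    proof -
      have "\<forall>i<k. f (0 + i * 1) = f 0"
      proof (intro allI impI)
        fix i assume "i < k"
        with True have "i = 0" by linarith
        then show "f (0 + i * 1) = f 0" by simp
      qed
      moreover have "0 + k * 1 \<le> 1"
        using True by simp
      ultimately show ?thesis
        unfolding mono_progression_def by blast
    qed
    then show ?thesis
      unfolding vdW_def by blast
  next
    case False
    then have "vdW (Suc (k - 1))"
      using less[of "k - 1"] by (intro vdW_Suc) simp_all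
    with False show ?thesis
      by (simp add: Suc_diff_1)
  qed
qed

section \<open>Compactness\<close>

definition mono_solution_upto :: "nat \<Rightarrow> (nat \<Rightarrow> int) \<Rightarrow> nat \<Rightarrow> (int \<Rightarrow> nat) \<Rightarrow> bool" where
  "mono_solution_upto n a N c \<longleftrightarrow>
     (\<exists>x. (\<forall>i<n. 0 < x i \<and> x i \<le> int N) \<and> (\<Sum>i<n. a i * x i) = 0 \<and> (\<exists>k. \<forall>i<n. c (x i) = k))"

lemma mono_solution_upto_mono:
  "mono_solution_upto n a N c \<Longrightarrow> N \<le> N' \<Longrightarrow> mono_solution_upto n a N' c"
  unfolding mono_solution_upto_def by (meson of_nat_le_iff order_trans)

lemma mono_solution_upto_cong:
  "(\<And>y. 0 < y \<Longrightarrow> y \<le> int N \<Longrightarrow> c y = c' y) \<Longrightarrow>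
     mono_solution_upto n a N c \<longleftrightarrow> mono_solution_upto n a N c'"
  unfolding mono_solution_upto_def by metis

lemma antimono_witnesses_pigeonhole:
  assumes "finite V"
    and witness: "\<And>M. \<exists>c. P M c \<and> g c \<in> V"
    and antimono: "\<And>M M' c. M \<le> M' \<Longrightarrow> P M' c \<Longrightarrow> P M c"
  shows "\<exists>v. \<forall>M :: nat. \<exists>c. P M c \<and> g c = v"
proof (rule ccontr)
  assume "\<nexists>v. \<forall>M. \<exists>c. P M c \<and> g c = v"
  then obtain bound where bound: "\<And>v c. P (bound v) c \<Longrightarrow> g c \<noteq> v"
    by metis
  define M where "M = Max (bound ` V)"
  obtain c where "P M c" and "g c \<in> V"
    using witness by blast
  moreover have "bound (g c) \<le> M"
    using \<open>g c \<in> V\<close> \<open>finite V\<close> by (simp add: M_def)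
  ultimately have "P (bound (g c)) c"
    using antimono by blast
  then show False
    using bound by blast
qed

definition extendable_prefix :: "nat \<Rightarrow> nat \<Rightarrow> (nat \<Rightarrow> int) \<Rightarrow> nat \<Rightarrow> (int \<Rightarrow> nat) \<Rightarrow> bool" where
  "extendable_prefix r n a N p \<longleftrightarrow>
     (\<forall>M. \<exists>c. (\<forall>y>0. c y < r) \<and> \<not> mono_solution_upto n a M c \<and>
             (\<forall>y. 0 < y \<and> y \<le> int N \<longrightarrow> c y = p y))"

lemma extendable_prefix_Suc:
  assumes "extendable_prefix r n a N p"
  shows "\<exists>v. extendable_prefix r n a (Suc N) (p(int N + 1 := v))"
proof -
  have "\<exists>v. \<forall>M. \<exists>c. ((\<forall>y>0. c y < r) \<and> \<not> mono_solution_upto n a M c \<and>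
            (\<forall>y. 0 < y \<and> y \<le> int N \<longrightarrow> c y = p y)) \<and> c (int N + 1) = v"
  proof (rule antimono_witnesses_pigeonhole[of "{..<r}"])
    show "\<exists>c. ((\<forall>y>0. c y < r) \<and> \<not> mono_solution_upto n a M c \<and>
            (\<forall>y. 0 < y \<and> y \<le> int N \<longrightarrow> c y = p y)) \<and> c (int N + 1) \<in> {..<r}" for M
    proof -
      obtain c where "\<forall>y>0. c y < r" "\<not> mono_solution_upto n a M c"
        "\<forall>y. 0 < y \<and> y \<le> int N \<longrightarrow> c y = p y"
        using assms unfolding extendable_prefix_def by blast
      moreover have "c (int N + 1) < r"
        using \<open>\<forall>y>0. c y < r\<close> by simp
      ultimately show ?thesis
        by blast
    qed
  next
    fix M M' :: nat and c :: "int \<Rightarrow> nat"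
    assume "M \<le> M'" and "(\<forall>y>0. c y < r) \<and> \<not> mono_solution_upto n a M' c \<and>
        (\<forall>y. 0 < y \<and> y \<le> int N \<longrightarrow> c y = p y)"
    then show "(\<forall>y>0. c y < r) \<and> \<not> mono_solution_upto n a M c \<and>
        (\<forall>y. 0 < y \<and> y \<le> int N \<longrightarrow> c y = p y)"
      using mono_solution_upto_mono by blast
  qed simp
  then obtain v where v: "\<forall>M. \<exists>c. ((\<forall>y>0. c y < r) \<and> \<not> mono_solution_upto n a M c \<and>
      (\<forall>y. 0 < y \<and> y \<le> int N \<longrightarrow> c y = p y)) \<and> c (int N + 1) = v"
    by blast
  have "extendable_prefix r n a (Suc N) (p(int N + 1 := v))"
    unfolding extendable_prefix_def
  proof
    fix M
    obtain c where "\<forall>y>0. c y < r" and "\<not> mono_solution_upto n a M c"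
      and agree: "\<forall>y. 0 < y \<and> y \<le> int N \<longrightarrow> c y = p y" and "c (int N + 1) = v"
      using v by blast
    moreover have "\<forall>y. 0 < y \<and> y \<le> int (Suc N) \<longrightarrow> c y = (p(int N + 1 := v)) y"
      using agree \<open>c (int N + 1) = v\<close> by auto
    ultimately show "\<exists>c. (\<forall>y>0. c y < r) \<and> \<not> mono_solution_upto n a M c \<and>
        (\<forall>y. 0 < y \<and> y \<le> int (Suc N) \<longrightarrow> c y = (p(int N + 1 := v)) y)"
      by blast
  qed
  then show ?thesis ..
qed

text \<open>Koenig's lemma: a branch of extendable prefixes is a colouring of all positive integers
  without monochromatic solutions.\<close>

lemma r_regular_imp_mono_solution_upto:
  assumes "r_regular r n a"
  shows "\<exists>N. \<forall>c. (\<forall>y>0. c y < r) \<longrightarrow> mono_solution_upto n a N c"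
proof (rule ccontr)
  assume "\<not> ?thesis"
  then have start: "extendable_prefix r n a 0 p" for p
    by (auto simp: extendable_prefix_def)
  have step: "\<exists>p'. extendable_prefix r n a (Suc N) p' \<and> (\<forall>y. 0 < y \<and> y \<le> int N \<longrightarrow> p' y = p y)"
    if prefix: "extendable_prefix r n a N p" for N p
  proof -
    obtain v where "extendable_prefix r n a (Suc N) (p(int N + 1 := v))"
      using extendable_prefix_Suc[OF prefix] ..
    moreover have "\<forall>y. 0 < y \<and> y \<le> int N \<longrightarrow> (p(int N + 1 := v)) y = p y"
      by simp
    ultimately show ?thesis
      by blast
  qed
  obtain P where P: "\<And>N. extendable_prefix r n a N (P N)"
    and P_agree: "\<And>N y. 0 < y \<Longrightarrow> y \<le> int N \<Longrightarrow> P (Suc N) y = P N y"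
    using dependent_nat_choice[of "extendable_prefix r n a"
        "\<lambda>N p p'. \<forall>y. 0 < y \<and> y \<le> int N \<longrightarrow> p' y = p y"] start step by blast
  have P_stable: "P K y = P N y" if "0 < y" "y \<le> int N" "N \<le> K" for N K y
    using \<open>N \<le> K\<close>
  proof (induction K rule: dec_induct)
    case (step K)
    then show ?case
      using P_agree that by simp
  qed simp
  define colour where "colour y = P (nat y) y" for y
  have "colour y < r" if "0 < y" for y
    using P[of "nat y"] that unfolding extendable_prefix_def colour_def by fastforce
  then obtain x k where x_pos: "\<forall>i<n. 0 < x i" and "(\<Sum>i<n. a i * x i) = 0"
    and x_mono: "\<forall>i<n. colour (x i) = k"
    using assms unfolding r_regular_def by blast
  define M where "M = nat (\<Sum>i<n. x i)"
  have "x i \<le> int M" if "i < n" for i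
  proof -
    have "x i \<le> (\<Sum>i<n. x i)"
      using that x_pos by (intro member_le_sum) (auto simp: less_imp_le)
    then show ?thesis
      unfolding M_def by simp
  qed
  then have "mono_solution_upto n a M colour"
    unfolding mono_solution_upto_def using x_pos x_mono \<open>(\<Sum>i<n. a i * x i) = 0\<close> by blast
  moreover obtain c where "\<not> mono_solution_upto n a M c"
    and "\<forall>y. 0 < y \<and> y \<le> int M \<longrightarrow> c y = P M y"
    using P[of M] unfolding extendable_prefix_def by blast
  moreover have "colour y = P M y" if "0 < y" "y \<le> int M" for y
    using P_stable[of y "nat y" M] that by (simp add: colour_def)
  ultimately show False
    using mono_solution_upto_cong[of M colour c n a] by simp
qed

section \<open>Progressions of dilations\<close>

lemma vdW_dilation:
  fixes c :: "int \<Rightarrow> nat"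
  assumes "\<forall>y>0. c y < r"
  shows "\<exists>T e :: int. 0 < T \<and> 0 < e \<and>
           (\<forall>i j. \<bar>i\<bar> \<le> int K \<and> 1 \<le> j \<and> j \<le> int N \<longrightarrow>
              0 < T + i * e \<and> c ((T + i * e) * j) = c (T * j))"
proof -
  define colours where "colours = {xs. set xs \<subseteq> {..<r} \<and> length xs = N}"
  define g where "g t = map (\<lambda>j. c (int (Suc t) * int j)) [1..<Suc N]" for t
  have "finite colours"
    unfolding colours_def using finite_lists_length_eq[of "{..<r}" N] by simp
  moreover have "range g \<subseteq> colours"
    using assms by (auto simp: g_def colours_def)
  ultimately obtain b e where "0 < e" and g_const: "\<forall>i<Suc (2 * K). g (b + i * e) = g b"
    using vdW_countable[OF vdW_holds, of colours "Suc (2 * K)"]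
    unfolding mono_progression_def by blast
  have same_colour: "c (int (Suc (b + u * e)) * j) = c (int (Suc b) * j)"
    if "u < Suc (2 * K)" and "1 \<le> j" and "j \<le> int N" for u j
  proof -
    have "nat j \<in> set [1..<Suc N]"
      using that by auto
    moreover have "g (b + u * e) = g b"
      using g_const that(1) by blast
    ultimately show ?thesis
      using \<open>1 \<le> j\<close> unfolding g_def map_eq_conv by force
  qed
  define T where "T = int (Suc (b + K * e))"
  have "0 < T + i * int e \<and> c ((T + i * int e) * j) = c (T * j)"
    if "\<bar>i\<bar> \<le> int K" and "1 \<le> j" and "j \<le> int N" for i j
  proof -
    define u where "u = nat (int K + i)"
    have "u < Suc (2 * K)" and shift: "T + i * int e = int (Suc (b + u * e))"
      using that by (auto simp: u_def T_def algebra_simps)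
    then have "c ((T + i * int e) * j) = c (int (Suc b) * j)"
      unfolding shift using same_colour that by blast
    also have "\<dots> = c (T * j)"
      unfolding T_def using same_colour[of K j] that by simp
    finally have "c ((T + i * int e) * j) = c (T * j)" .
    moreover have "0 < T + i * int e"
      unfolding shift by (simp only: of_nat_0_less_iff zero_less_Suc)
    ultimately show ?thesis
      using \<open>1 \<le> j\<close> by (simp add: zero_less_mult_iff)
  qed
  moreover have "0 < T"
    unfolding T_def by (simp only: of_nat_0_less_iff zero_less_Suc)
  ultimately have "0 < T \<and> 0 < int e \<and> (\<forall>i j. \<bar>i\<bar> \<le> int K \<and> 1 \<le> j \<and> j \<le> int N \<longrightarrow>
      0 < T + i * int e \<and> c ((T + i * int e) * j) = c (T * j))"
    using \<open>0 < e\<close> by auto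
  then show ?thesis
    by blast
qed

lemma vdW_common_difference:
  fixes c :: "int \<Rightarrow> nat"
  assumes "\<forall>y>0. c y < r"
  shows "\<exists>T d :: int. 0 < T \<and> 0 < d \<and>
           (\<forall>j l. 1 \<le> j \<and> j \<le> int N \<and> \<bar>l\<bar> \<le> int m \<longrightarrow>
              0 < T * j + l * d \<and> c (T * j + l * d) = c (T * j))"
proof -
  obtain T e :: int where "0 < T" "0 < e" and dilation:
    "\<forall>i j. \<bar>i\<bar> \<le> int (m * fact N) \<and> 1 \<le> j \<and> j \<le> int N \<longrightarrow>
       0 < T + i * e \<and> c ((T + i * e) * j) = c (T * j)"
    using vdW_dilation[OF assms] by blast
  have "0 < T * j + l * (e * fact N) \<and> c (T * j + l * (e * fact N)) = c (T * j)"
    if "1 \<le> j" "j \<le> int N" "\<bar>l\<bar> \<le> int m" for j l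
  proof -
    have "1 \<le> nat j" and "nat j \<le> N"
      using that by auto
    then obtain q where q: "fact N = nat j * q"
      using dvd_fact by blast
    moreover have "q \<le> nat j * q"
      using \<open>1 \<le> nat j\<close> by simp
    ultimately have "q \<le> fact N"
      by simp
    then have "int q \<le> int (fact N)"
      by (simp only: of_nat_le_iff)
    then have "int q \<le> fact N"
      by (simp only: of_nat_fact)
    then have "\<bar>l * int q\<bar> \<le> int (m * fact N)"
      using \<open>\<bar>l\<bar> \<le> int m\<close> by (simp add: abs_mult mult_mono)
    then have "0 < T + l * int q * e \<and> c ((T + l * int q * e) * j) = c (T * j)"
      using dilation that by blast
    moreover have "(fact N :: int) = int (nat j * q)"
      unfolding q[symmetric] of_nat_fact ..
    then have "(fact N :: int) = j * int q"
      using \<open>1 \<le> j\<close> by simp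
    then have "T * j + l * (e * fact N) = (T + l * int q * e) * j"
      by (simp add: algebra_simps)
    ultimately show ?thesis
      using \<open>1 \<le> j\<close> by (simp add: zero_less_mult_iff)
  qed
  then have "0 < T \<and> 0 < e * fact N \<and> (\<forall>j l. 1 \<le> j \<and> j \<le> int N \<and> \<bar>l\<bar> \<le> int m \<longrightarrow>
      0 < T * j + l * (e * fact N) \<and> c (T * j + l * (e * fact N)) = c (T * j))"
    using \<open>0 < T\<close> \<open>0 < e\<close> by auto
  then show ?thesis
    by blast
qed

theorem lemma1:
  fixes r n :: nat and a :: "nat \<Rightarrow> int" and C :: real and c :: "int \<Rightarrow> nat"
  assumes "r > 0"
    and "\<forall>i<n. a i \<noteq> 0"
    and "r_regular r n a"
    and "C > 0"
    and "\<forall>y>0. c y < r"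
  shows "\<exists>x :: nat \<Rightarrow> int. \<exists>d :: int. d > 0 \<and> (\<forall>i<n. x i > 0) \<and> (\<Sum>i<n. a i * x i) = 0 \<and>
           (\<exists>k. \<forall>i<n. \<forall>l::int. real_of_int \<bar>l\<bar> \<le> C \<longrightarrow>
               x i + l * d > 0 \<and> c (x i + l * d) = k)"
proof -
  obtain N where N: "\<forall>c'. (\<forall>y>0. c' y < r) \<longrightarrow> mono_solution_upto n a N c'"
    using r_regular_imp_mono_solution_upto[OF assms(3)] by blast
  obtain T d :: int where "0 < T" "0 < d" and progression:
    "\<forall>j l. 1 \<le> j \<and> j \<le> int N \<and> \<bar>l\<bar> \<le> int (nat \<lfloor>C\<rfloor>) \<longrightarrow>
       0 < T * j + l * d \<and> c (T * j + l * d) = c (T * j)"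
    using vdW_common_difference[OF assms(5)] by blast
  have "mono_solution_upto n a N (\<lambda>y. c (T * y))"
    using N assms(5) \<open>0 < T\<close> by simp
  then obtain x k where x: "\<forall>i<n. 0 < x i \<and> x i \<le> int N" and "(\<Sum>i<n. a i * x i) = 0"
    and colour: "\<forall>i<n. c (T * x i) = k"
    unfolding mono_solution_upto_def by blast
  have "0 < T * x i + l * d \<and> c (T * x i + l * d) = k" if "i < n" and "real_of_int \<bar>l\<bar> \<le> C" for i l
  proof -
    have "\<bar>l\<bar> \<le> int (nat \<lfloor>C\<rfloor>)"
      using that(2) by linarith
    then show ?thesis
      using progression x colour \<open>i < n\<close> by auto
  qed
  moreover have "(\<Sum>i<n. a i * (T * x i)) = T * (\<Sum>i<n. a i * x i)"
    by (simp add: sum_distrib_left algebra_simps)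
  ultimately show ?thesis
    using x \<open>(\<Sum>i<n. a i * x i) = 0\<close> \<open>0 < T\<close> \<open>0 < d\<close>
    by (intro exI[where x = "\<lambda>i. T * x i"] exI[where x = d] conjI exI[where x = k]) auto
qed

end
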